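(* Let $\mathcal H$ be a Hilbert space and $\mathcal S,\mathcal A\subseteq\mathcal H$ closed subspaces with $\mathcal S,\mathcal A,\mathcal S^\perp,\mathcal A^\perp$ nonzero, $\mathcal A\oplus\mathcal S^\perp=\mathcal H$, and $\sin(\mathcal A^\perp,\mathcal S)>0$. Fix $\lambda\in[0,1]$, let $B:=\lambda P_{\mathcal A\mathcal S^\perp}+(1-\lambda)P_{\mathcal S}$ and $\mathcal B:=\mathcal R(B)$. Then $$\frac{1}{1+\lambda^2\frac{\sin^2(\mathcal A,\mathcal S)}{\cos^2(\mathcal A,\mathcal S)}}\le\sin^2(\mathcal B^\perp,\mathcal S)\le\frac{1}{1+\lambda^2\frac{\cos^2(\mathcal A^\perp,\mathcal S)}{\sin^2(\mathcal A^\perp,\mathcal S)}}.$$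
   Context: $P_{\mathcal V}$ is the orthogonal projection onto a closed subspace $\mathcal V$, $\mathcal V^\perp$ its orthogonal complement, $\mathcal R(\cdot)$ the range. For closed subspaces with $\mathcal V_1\oplus\mathcal V_2=\mathcal H$, $P_{\mathcal V_1\mathcal V_2}$ is the oblique projection onto $\mathcal V_1$ along $\mathcal V_2$ (identity on $\mathcal V_1$, zero on $\mathcal V_2$). Angles between nonzero closed subspaces: $\cos(\mathcal V_1,\mathcal V_2):=\inf_{0\ne x\in\mathcal V_1}\|P_{\mathcal V_2}x\|/\|x\|$, $\sin(\mathcal V_1,\mathcal V_2):=\sup_{0\ne x\in\mathcal V_1}\|P_{\mathcal V_2^\perp}x\|/\|x\|$. *)

theory Defs
  imports "HOL-Analysis.Analysis"
begin

text \<open>Real Hilbert space: type class real_inner + complete_space.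
Closed subspace: subspace V and closed V. Orthogonal complement: orthogonal_comp (library).\<close>

definition closed_subspace :: "'a::real_normed_vector set \<Rightarrow> bool" where
  "closed_subspace V \<longleftrightarrow> subspace V \<and> closed V"

definition orth_proj :: "'a::real_inner set \<Rightarrow> 'a \<Rightarrow> 'a" where
  "orth_proj V x = (THE y. y \<in> V \<and> x - y \<in> orthogonal_comp V)"

definition direct_sum_UNIV :: "'a::real_vector set \<Rightarrow> 'a set \<Rightarrow> bool" where
  "direct_sum_UNIV V1 V2 \<longleftrightarrow> V1 \<inter> V2 = {0} \<and> (\<forall>x. \<exists>a\<in>V1. \<exists>b\<in>V2. x = a + b)"

definition obl_proj :: "'a::real_vector set \<Rightarrow> 'a set \<Rightarrow> 'a \<Rightarrow> 'a" where
  "obl_proj V1 V2 x = (THE y. y \<in> V1 \<and> x - y \<in> V2)"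

definition cos_subsp :: "'a::real_inner set \<Rightarrow> 'a set \<Rightarrow> real" where
  "cos_subsp V1 V2 = (INF x\<in>V1 - {0}. norm (orth_proj V2 x) / norm x)"

definition sin_subsp :: "'a::real_inner set \<Rightarrow> 'a set \<Rightarrow> real" where
  "sin_subsp V1 V2 = (SUP x\<in>V1 - {0}. norm (orth_proj (orthogonal_comp V2) x) / norm x)"

end

theory Submission
  imports Defs
begin

text \<open>
  Write \<open>Q = P\<^sub>A\<^sub>S\<^sub>\<bottom>\<close> and split every vector as \<open>y = w + u\<close> with \<open>w = P\<^sub>S y\<close> and
  \<open>u \<in> S\<^sup>\<bottom>\<close>. Since \<open>Q x = Q (P\<^sub>S x)\<close>, the range of \<open>B\<^sub>\<lambda>\<close> is \<open>{s + \<lambda>(Q s - s) | s \<in> S}\<close>,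
  so \<open>y \<perp> R(B\<^sub>\<lambda>)\<close> iff \<open>\<langle>s, w\<rangle> + \<lambda>\<langle>Q s - s, u\<rangle> = 0\<close> for all \<open>s \<in> S\<close>. As \<open>B\<^sub>1 = Q\<close> has range
  \<open>A\<close>, multiplying the \<open>S\<close>-component by \<open>\<lambda>\<close> maps \<open>A\<^sup>\<bottom>\<close> into \<open>R(B\<^sub>\<lambda>)\<^sup>\<bottom>\<close>, and multiplying it by
  \<open>1/\<lambda>\<close> maps back. The sine in question is the supremum of \<open>|u|/|y|\<close> with
  \<open>|y|\<^sup>2 = |w|\<^sup>2 + |u|\<^sup>2\<close>. For the lower bound, a nonzero \<open>y \<in> A\<^sup>\<bottom>\<close> satisfies
  \<open>|w|\<^sup>2 = -\<langle>Q w - w, u\<rangle> \<le> tan(A,S) |w| |u|\<close>, which bounds the ratio for its image in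
  \<open>R(B\<^sub>\<lambda>)\<^sup>\<bottom>\<close>. For the upper bound, the image in \<open>A\<^sup>\<bottom>\<close> of any \<open>y \<in> R(B\<^sub>\<lambda>)\<^sup>\<bottom>\<close> gives
  \<open>|u|\<^sup>2 \<le> sin\<^sup>2(A\<^sup>\<bottom>,S) (|w|\<^sup>2/\<lambda>\<^sup>2 + |u|\<^sup>2)\<close>, and \<open>cos\<^sup>2 + sin\<^sup>2 \<le> 1\<close> finishes.

  The tangent \<open>tan(A,S)\<close> is finite because \<open>A + S\<^sup>\<bottom> = H\<close>: by Baire's theorem \<open>P\<^sub>A\<close> is
  bounded below on \<open>S\<close>, hence maps \<open>S\<close> onto \<open>A\<close>, and duality makes \<open>P\<^sub>S\<close> bounded below on \<open>A\<close>.
\<close>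

section \<open>Orthogonal projections onto closed subspaces\<close>

lemma orthogonal_comp_iff: "x \<in> orthogonal_comp V \<longleftrightarrow> (\<forall>v\<in>V. v \<bullet> x = 0)"
  by (simp add: orthogonal_comp_def orthogonal_def)

lemma orth_proj_unique:
  assumes "subspace V" "y \<in> V" "x - y \<in> orthogonal_comp V"
  shows "orth_proj V x = y"
  unfolding orth_proj_def
proof (rule the_equality)
  show "y \<in> V \<and> x - y \<in> orthogonal_comp V" using assms by auto
  fix z assume z: "z \<in> V \<and> x - z \<in> orthogonal_comp V"
  have "z - y \<in> V" using assms z by (simp add: subspace_diff)
  moreover have "(x - y) - (x - z) \<in> orthogonal_comp V"
    using assms z subspace_orthogonal_comp by (blast intro: subspace_diff)
  ultimately have "(z - y) \<bullet> (z - y) = 0" by (simp add: orthogonal_comp_iff)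
  then show "z = y" by simp
qed

lemma Cauchy_minimizing_sequence:
  fixes V :: "'a::real_inner set"
  assumes "convex V" and y: "\<And>n. y n \<in> V"
    and d: "0 \<le> d" "\<And>v. v \<in> V \<Longrightarrow> d \<le> norm (x - v)"
    and approx: "\<And>n. norm (x - y n)^2 \<le> d^2 + 1 / Suc n"
  shows "Cauchy y"
proof (rule metric_CauchyI)
  fix e :: real assume e: "e > 0"
  obtain N where N: "1 / real (Suc N) < e^2 / 4"
    using e by (metis divide_pos_pos nat_approx_posE zero_less_numeral zero_less_power)
  have "dist (y m) (y n) < e" if "m \<ge> N" "n \<ge> N" for m n
  proof -
    have "(1/2) *\<^sub>R (y m + y n) \<in> V"
      using \<open>convex V\<close> y by (simp add: convexD scaleR_add_right)
    then have "2 * d \<le> norm (2 *\<^sub>R (x - (1/2) *\<^sub>R (y m + y n)))"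
      using d(2) by simp
    also have "2 *\<^sub>R (x - (1/2) *\<^sub>R (y m + y n)) = (x - y m) + (x - y n)"
      by (simp add: algebra_simps scaleR_2)
    finally have mid: "(2 * d)^2 \<le> norm ((x - y m) + (x - y n))^2"
      using d(1) by (intro power_mono) auto
    have "norm ((x - y m) - (x - y n))^2 + norm ((x - y m) + (x - y n))^2
        = 2 * norm (x - y m)^2 + 2 * norm (x - y n)^2"
      by (simp add: power2_norm_eq_inner inner_diff inner_add inner_commute algebra_simps)
    moreover have "1 / real (Suc m) \<le> 1 / real (Suc N)" "1 / real (Suc n) \<le> 1 / real (Suc N)"
      using that by (auto simp: divide_simps)
    ultimately have "norm (y n - y m)^2 < e^2"
      using mid approx[of m] approx[of n] N by (simp add: power_mult_distrib algebra_simps)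
    then show ?thesis
      using e by (simp add: power_less_imp_less_base dist_norm norm_minus_commute)
  qed
  then show "\<exists>M. \<forall>m\<ge>M. \<forall>n\<ge>M. dist (y m) (y n) < e" by blast
qed

lemma nearest_point_exists:
  fixes V :: "'a::{real_inner,complete_space} set"
  assumes "closed V" "convex V" "V \<noteq> {}"
  shows "\<exists>y\<in>V. \<forall>v\<in>V. norm (x - y) \<le> norm (x - v)"
proof -
  define d where "d = infdist x V"
  have d: "0 \<le> d" "\<And>v. v \<in> V \<Longrightarrow> d \<le> norm (x - v)"
    using infdist_le[of _ V x] by (auto simp: d_def dist_norm infdist_nonneg)
  have "\<exists>y\<in>V. norm (x - y) < sqrt (d^2 + 1 / Suc n)" for n
  proof -
    have "d < sqrt (d^2 + 1 / Suc n)"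
      by (intro real_less_rsqrt) simp
    then have "Inf (dist x ` V) < sqrt (d^2 + 1 / Suc n)"
      using \<open>V \<noteq> {}\<close> by (simp add: d_def infdist_notempty)
    then obtain y where "y \<in> V" "dist x y < sqrt (d^2 + 1 / Suc n)"
      using \<open>V \<noteq> {}\<close> cInf_lessD[of "dist x ` V"] by blast
    then show ?thesis by (auto simp: dist_norm)
  qed
  then obtain y where y: "\<And>n. y n \<in> V" and y_approx: "\<And>n. norm (x - y n) < sqrt (d^2 + 1 / Suc n)"
    by metis
  have approx: "norm (x - y n)^2 \<le> d^2 + 1 / Suc n" for n
    using y_approx[of n] real_sqrt_le_iff[of "norm (x - y n)^2"] by fastforce
  have "Cauchy y"
    by (rule Cauchy_minimizing_sequence[OF \<open>convex V\<close> y d approx])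
  then obtain z where lim: "y \<longlonglongrightarrow> z" using Cauchy_convergent_iff convergent_def by blast
  have "z \<in> V" using \<open>closed V\<close> y lim closed_sequentially by blast
  have "(\<lambda>n. norm (x - y n)^2) \<longlonglongrightarrow> norm (x - z)^2"
    by (intro tendsto_intros lim)
  moreover have "(\<lambda>n. d^2 + 1 / real (Suc n)) \<longlonglongrightarrow> d^2 + 0"
    by (intro tendsto_intros LIMSEQ_inverse_real_of_nat[unfolded inverse_eq_divide])
  ultimately have "norm (x - z)^2 \<le> d^2"
    using approx by (intro LIMSEQ_le) auto
  then have "norm (x - z) \<le> d"
    using d(1) by (simp add: power2_le_iff_abs_le)
  then show ?thesis using \<open>z \<in> V\<close> d(2) by force
qed

lemma nearest_point_orthogonal:
  assumes "subspace V" "y \<in> V" and nearest: "\<And>v. v \<in> V \<Longrightarrow> norm (x - y) \<le> norm (x - v)"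
  shows "x - y \<in> orthogonal_comp V"
  unfolding orthogonal_comp_iff
proof (intro ballI)
  fix v assume "v \<in> V"
  show "v \<bullet> (x - y) = 0"
  proof (cases "v = 0")
    case False
    define c where "c = (x - y) \<bullet> v"
    define t where "t = c / (v \<bullet> v)"
    have vv: "v \<bullet> v > 0" using False by simp
    have "y + t *\<^sub>R v \<in> V" using assms \<open>v \<in> V\<close> by (simp add: subspace_add subspace_scale)
    then have "norm (x - y)^2 \<le> norm ((x - y) - t *\<^sub>R v)^2"
      using nearest by (fastforce simp: algebra_simps intro: power_mono)
    also have "\<dots> = norm (x - y)^2 - 2 * t * c + t^2 * (v \<bullet> v)"
      unfolding power2_norm_eq_inner c_def
      by (simp add: inner_diff_left inner_diff_right inner_commute power2_eq_square algebra_simps)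
    also have "\<dots> = norm (x - y)^2 - c^2 / (v \<bullet> v)"
      using vv by (simp add: t_def power2_eq_square field_simps)
    finally have "c^2 / (v \<bullet> v) \<le> 0" by simp
    then have "c = 0" using vv by (simp add: divide_le_0_iff)
    then show ?thesis by (simp add: c_def inner_commute)
  qed simp
qed

context
  fixes V :: "'a::{real_inner,complete_space} set"
  assumes closed_subspace_V: "closed_subspace V"
begin

private lemma subspace_V: "subspace V"
  using closed_subspace_V by (simp add: closed_subspace_def)

lemma orth_proj_in: "orth_proj V x \<in> V"
  and orth_proj_residual: "x - orth_proj V x \<in> orthogonal_comp V"
proof -
  have "closed V" "V \<noteq> {}"
    using closed_subspace_V subspace_0[OF subspace_V] by (auto simp: closed_subspace_def)
  then obtain y where y: "y \<in> V" "\<forall>v\<in>V. norm (x - y) \<le> norm (x - v)"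
    using nearest_point_exists[OF _ subspace_imp_convex[OF subspace_V]] by metis
  then have "x - y \<in> orthogonal_comp V"
    using nearest_point_orthogonal[OF subspace_V] by blast
  with y have "orth_proj V x = y"
    by (intro orth_proj_unique[OF subspace_V]) auto
  with y \<open>x - y \<in> orthogonal_comp V\<close>
  show "orth_proj V x \<in> V" "x - orth_proj V x \<in> orthogonal_comp V" by auto
qed

lemma inner_orth_proj: "v \<in> V \<Longrightarrow> v \<bullet> orth_proj V x = v \<bullet> x"
  using orth_proj_residual[of x] by (simp add: orthogonal_comp_iff inner_diff_right)

lemma orth_proj_id: "v \<in> V \<Longrightarrow> orth_proj V v = v"
  by (rule orth_proj_unique[OF subspace_V]) (auto simp: orthogonal_comp_iff)

lemma orth_proj_orthogonal_comp: "orth_proj (orthogonal_comp V) x = x - orth_proj V x"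
proof (rule orth_proj_unique[OF subspace_orthogonal_comp orth_proj_residual])
  show "x - (x - orth_proj V x) \<in> orthogonal_comp (orthogonal_comp V)"
    using orth_proj_in orthogonal_comp_subset by auto
qed

lemma linear_orth_proj: "linear (orth_proj V)"
proof (rule linearI)
  fix x y and c :: real
  have "(x - orth_proj V x) + (y - orth_proj V y) \<in> orthogonal_comp V"
    using orth_proj_residual subspace_orthogonal_comp by (blast intro: subspace_add)
  then show "orth_proj V (x + y) = orth_proj V x + orth_proj V y"
    by (intro orth_proj_unique[OF subspace_V] subspace_add[OF subspace_V] orth_proj_in)
      (simp add: algebra_simps)
  have "c *\<^sub>R (x - orth_proj V x) \<in> orthogonal_comp V"
    using orth_proj_residual subspace_orthogonal_comp by (blast intro: subspace_scale)
  then show "orth_proj V (c *\<^sub>R x) = c *\<^sub>R orth_proj V x"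
    by (intro orth_proj_unique[OF subspace_V] subspace_scale[OF subspace_V] orth_proj_in)
      (simp add: algebra_simps)
qed

lemma norm_orth_proj_Pythagorean:
  "(norm x)^2 = (norm (orth_proj V x))^2 + (norm (x - orth_proj V x))^2"
  using norm_add_Pythagorean[of "orth_proj V x" "x - orth_proj V x"]
    orth_proj_in orth_proj_residual by (simp add: orthogonal_comp_iff orthogonal_def)

lemma norm_orth_proj_le: "norm (orth_proj V x) \<le> norm x"
  and norm_orth_proj_residual_le: "norm (x - orth_proj V x) \<le> norm x"
proof -
  have "(norm (orth_proj V x))^2 \<le> (norm x)^2" "(norm (x - orth_proj V x))^2 \<le> (norm x)^2"
    using norm_orth_proj_Pythagorean[of x] by auto
  then show "norm (orth_proj V x) \<le> norm x" "norm (x - orth_proj V x) \<le> norm x"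
    by (auto simp: power2_le_iff_abs_le)
qed

lemma bounded_linear_orth_proj: "bounded_linear (orth_proj V)"
  by (rule bounded_linear_intro[of _ 1])
    (simp_all add: linear_add[OF linear_orth_proj] linear_scale[OF linear_orth_proj] norm_orth_proj_le)

lemma orth_proj_zero: "orth_proj V 0 = 0"
  by (rule orth_proj_id) (rule subspace_0[OF subspace_V])

end

section \<open>Angles between subspaces\<close>

context
  fixes S :: "'a::{real_inner,complete_space} set" and V :: "'a set"
  assumes closed_subspace_S: "closed_subspace S"
begin

lemma sin_subsp_eq: "sin_subsp V S = (SUP y\<in>V - {0}. norm (y - orth_proj S y) / norm y)"
  by (simp add: sin_subsp_def orth_proj_orthogonal_comp[OF closed_subspace_S])

lemma norm_residual_le_sin_subsp:
  assumes "y \<in> V"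
  shows "norm (y - orth_proj S y) \<le> sin_subsp V S * norm y"
proof (cases "y = 0")
  case False
  have "bdd_above ((\<lambda>y. norm (y - orth_proj S y) / norm y) ` (V - {0}))"
    using norm_orth_proj_residual_le[OF closed_subspace_S]
    by (intro bdd_aboveI[of _ 1]) (auto simp: divide_le_eq_1)
  then have "norm (y - orth_proj S y) / norm y \<le> sin_subsp V S"
    unfolding sin_subsp_eq using assms False by (intro cSUP_upper) auto
  then show ?thesis using False by (simp add: divide_le_eq)
qed (simp add: orth_proj_zero[OF closed_subspace_S])

lemma sin_subsp_le:
  assumes "V - {0} \<noteq> {}" and "\<And>y. y \<in> V \<Longrightarrow> norm (y - orth_proj S y) \<le> c * norm y"
  shows "sin_subsp V S \<le> c"
  unfolding sin_subsp_eq using assms by (intro cSUP_least) (auto simp: divide_le_eq)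

lemma sin_subsp_nonneg: "V - {0} \<noteq> {} \<Longrightarrow> 0 \<le> sin_subsp V S"
proof -
  assume "V - {0} \<noteq> {}"
  then obtain y where "y \<in> V" "y \<noteq> 0" by blast
  then have "0 \<le> sin_subsp V S * norm y"
    using norm_residual_le_sin_subsp[of y] norm_ge_zero order_trans by blast
  with \<open>y \<noteq> 0\<close> show ?thesis by (simp add: zero_le_mult_iff)
qed

lemma cos_subsp_le_norm_orth_proj:
  assumes "y \<in> V"
  shows "cos_subsp V S * norm y \<le> norm (orth_proj S y)"
proof (cases "y = 0")
  case False
  have "bdd_below ((\<lambda>y. norm (orth_proj S y) / norm y) ` (V - {0}))"
    by (intro bdd_belowI[of _ 0]) auto
  then have "cos_subsp V S \<le> norm (orth_proj S y) / norm y"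
    unfolding cos_subsp_def using assms False by (intro cINF_lower) auto
  then show ?thesis using False by (simp add: le_divide_eq)
qed simp

lemma cos_subsp_ge:
  assumes "V - {0} \<noteq> {}" and "\<And>y. y \<in> V \<Longrightarrow> c * norm y \<le> norm (orth_proj S y)"
  shows "c \<le> cos_subsp V S"
  unfolding cos_subsp_def using assms by (intro cINF_greatest) (auto simp: le_divide_eq)

lemma cos_subsp_sq_le_one_minus_sin_subsp_sq:
  assumes "V - {0} \<noteq> {}"
  shows "(cos_subsp V S)^2 \<le> 1 - (sin_subsp V S)^2"
proof -
  define c where "c = cos_subsp V S"
  have "0 \<le> c"
    unfolding c_def by (rule cos_subsp_ge[OF assms]) simp
  moreover have "c \<le> 1"
  proof -
    obtain y where "y \<in> V" "y \<noteq> 0" using assms by blast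
    then have "c * norm y \<le> 1 * norm y"
      using cos_subsp_le_norm_orth_proj[of y] norm_orth_proj_le[OF closed_subspace_S, of y]
      unfolding c_def by linarith
    with \<open>y \<noteq> 0\<close> show ?thesis by simp
  qed
  ultimately have c_sq: "0 \<le> 1 - c^2" "c^2 \<le> 1"
    by (simp_all add: power_le_one)
  have "sin_subsp V S \<le> sqrt (1 - c^2)"
  proof (rule sin_subsp_le[OF assms])
    fix y assume "y \<in> V"
    have "(c * norm y)^2 \<le> (norm (orth_proj S y))^2"
      using cos_subsp_le_norm_orth_proj[OF \<open>y \<in> V\<close>] \<open>0 \<le> c\<close> unfolding c_def
      by (intro power_mono) simp_all
    moreover have "(sqrt (1 - c^2) * norm y)^2 = (norm y)^2 - (c * norm y)^2"
      using c_sq by (simp add: power_mult_distrib left_diff_distrib)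
    ultimately have "(norm (y - orth_proj S y))^2 \<le> (sqrt (1 - c^2) * norm y)^2"
      using norm_orth_proj_Pythagorean[OF closed_subspace_S, of y] by linarith
    then show "norm (y - orth_proj S y) \<le> sqrt (1 - c^2) * norm y"
      by (rule power2_le_imp_le) (simp add: c_sq)
  qed
  then have "(sin_subsp V S)^2 \<le> (sqrt (1 - c^2))^2"
    using sin_subsp_nonneg[OF assms] by (simp add: power_mono)
  then have "(sin_subsp V S)^2 \<le> 1 - c^2"
    using c_sq by simp
  then show ?thesis by (simp add: c_def)
qed

end

section \<open>A Baire category argument\<close>

lemma Baire_closed_cover_ball:
  fixes S :: "'a::complete_space set" and K :: "nat \<Rightarrow> 'a set"
  assumes "closed S" "S \<noteq> {}"
    and closed_K: "\<And>n. closedin (top_of_set S) (K n)" and cover: "(\<Union>n. K n) = S"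
  shows "\<exists>n z e. z \<in> S \<and> e > 0 \<and> S \<inter> ball z e \<subseteq> K n"
proof -
  have "\<exists>n. top_of_set S interior_of K n \<noteq> {}"
  proof (rule ccontr)
    assume "\<nexists>n. top_of_set S interior_of K n \<noteq> {}"
    then have empty: "\<And>T. T \<in> range K \<Longrightarrow> top_of_set S interior_of T = {}" by auto
    have "completely_metrizable_space (top_of_set S)"
      using \<open>closed S\<close> completely_metrizable_space_closedin completely_metrizable_space_euclidean
      by (metis closed_closedin)
    then have "top_of_set S interior_of (\<Union>n. K n) = {}"
      using empty closed_K by (intro Baire_category_alt) auto
    then show False
      using cover \<open>S \<noteq> {}\<close> interior_of_topspace[of "top_of_set S"] by simp
  qed
  then obtain n z where "z \<in> top_of_set S interior_of K n" by blast
  then obtain U where "openin (top_of_set S) U" "z \<in> U" "U \<subseteq> K n"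
    by (auto simp: interior_of_def)
  then obtain W where "open W" "U = S \<inter> W" by (auto simp: openin_open)
  then obtain e where "e > 0" "ball z e \<subseteq> W"
    using \<open>z \<in> U\<close> open_contains_ball by blast
  then show ?thesis
    using \<open>U = S \<inter> W\<close> \<open>z \<in> U\<close> \<open>U \<subseteq> K n\<close> by blast
qed

lemma norm_le_if_inner_le_on_ball:
  fixes S :: "'a::real_inner set"
  assumes "subspace S" "u \<in> S" "e > 0"
    and bound: "\<And>s. s \<in> S \<Longrightarrow> norm s < e \<Longrightarrow> u \<bullet> s \<le> M"
  shows "e / 2 * norm u \<le> M"
proof (cases "u = 0")
  case True
  then show ?thesis using bound[of 0] assms by (simp add: subspace_0)
next
  case False
  define s where "s = (e / 2 / norm u) *\<^sub>R u"
  have "s \<in> S" "norm s < e"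
    using assms False by (auto simp: s_def subspace_scale)
  have "e / 2 * norm u = u \<bullet> s"
    using False by (simp add: s_def power2_norm_eq_inner[symmetric] power2_eq_square)
  also have "\<dots> \<le> M"
    by (rule bound[OF \<open>s \<in> S\<close> \<open>norm s < e\<close>])
  finally show ?thesis .
qed

lemma closedin_inner_le:
  fixes M :: "'a::real_inner \<Rightarrow> real"
  shows "closedin (top_of_set S) {s \<in> S. \<forall>u\<in>S. u \<bullet> s \<le> M u}"
proof -
  have "{s \<in> S. \<forall>u\<in>S. u \<bullet> s \<le> M u} = S \<inter> (\<Inter>u\<in>S. {s. u \<bullet> s \<le> M u})"
    by auto
  moreover have "closed (\<Inter>u\<in>S. {s. u \<bullet> s \<le> M u})"
    by (intro closed_INT ballI closed_halfspace_le)
  ultimately show ?thesis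
    by (simp add: closedin_closed_Int)
qed

lemma Baire_uniform_lower_bound:
  fixes S :: "'a::{real_inner,complete_space} set" and p :: "'a \<Rightarrow> real"
  assumes "closed_subspace S"
    and p_nonneg: "\<And>u. 0 \<le> p u" and p_minus: "\<And>u. u \<in> S \<Longrightarrow> p (- u) = p u"
    and pointwise: "\<And>s. s \<in> S \<Longrightarrow> \<exists>M. \<forall>u\<in>S. u \<bullet> s \<le> M * p u"
  shows "\<exists>c>0. \<forall>u\<in>S. c * norm u \<le> p u"
proof -
  have sub: "subspace S" and "closed S"
    using assms(1) by (auto simp: closed_subspace_def)
  define K where "K n = {s \<in> S. \<forall>u\<in>S. u \<bullet> s \<le> real n * p u}" for n :: nat
  have closed_K: "closedin (top_of_set S) (K n)" for n
    unfolding K_def by (rule closedin_inner_le)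
  have cover: "(\<Union>n. K n) = S"
  proof (intro equalityI subsetI)
    fix s assume "s \<in> S"
    then obtain M where M: "\<forall>u\<in>S. u \<bullet> s \<le> M * p u" using pointwise by blast
    obtain n where n: "M \<le> real n" using real_arch_simple by blast
    have "u \<bullet> s \<le> real n * p u" if "u \<in> S" for u
      using M that mult_right_mono[OF n p_nonneg[of u]] by force
    with \<open>s \<in> S\<close> show "s \<in> (\<Union>n. K n)" by (auto simp: K_def)
  qed (auto simp: K_def)
  have "S \<noteq> {}" using subspace_0[OF sub] by blast
  then obtain n z e where "z \<in> S" "e > 0" and ball: "S \<inter> ball z e \<subseteq> K n"
    using Baire_closed_cover_ball[OF \<open>closed S\<close> _ closed_K cover] by blast
  \<comment> \<open>Both z + s and z - s lie in K n; adding the two inequalities cancels z.\<close>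
  have small: "u \<bullet> s \<le> real n * p u" if "u \<in> S" "s \<in> S" "norm s < e" for u s
  proof -
    have "z + s \<in> K n" "z - s \<in> K n"
      using ball \<open>z \<in> S\<close> that sub by (auto simp: subspace_add subspace_diff dist_norm)
    moreover have "- u \<in> S" using sub \<open>u \<in> S\<close> by (rule subspace_neg)
    ultimately have "u \<bullet> (z + s) \<le> real n * p u" "(- u) \<bullet> (z - s) \<le> real n * p (- u)"
      using \<open>u \<in> S\<close> unfolding K_def by blast+
    then show ?thesis
      using p_minus[OF \<open>u \<in> S\<close>] by (simp add: inner_add_right inner_diff_right)
  qed
  show ?thesis
  proof (intro exI conjI ballI)
    show "e / (2 * (real n + 1)) > 0" using \<open>e > 0\<close> by simp
    fix u assume "u \<in> S"
    have "e / 2 * norm u \<le> real n * p u"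
      using sub \<open>u \<in> S\<close> \<open>e > 0\<close> small[OF \<open>u \<in> S\<close>] by (rule norm_le_if_inner_le_on_ball)
    also have "\<dots> \<le> (real n + 1) * p u"
      using p_nonneg[of u] by (simp add: mult_right_mono)
    finally show "e / (2 * (real n + 1)) * norm u \<le> p u"
      by (simp add: field_simps)
  qed
qed

lemma Cauchy_if_image_Cauchy_bounded_below:
  fixes f :: "'a::real_normed_vector \<Rightarrow> 'b::real_normed_vector"
  assumes "linear f" "subspace S" "c > 0"
    and below: "\<And>u. u \<in> S \<Longrightarrow> c * norm u \<le> norm (f u)"
    and s: "\<And>k. s k \<in> S" and "Cauchy (\<lambda>k. f (s k))"
  shows "Cauchy s"
proof (rule metric_CauchyI)
  fix r :: real assume "r > 0"
  then have "c * r > 0" using \<open>c > 0\<close> by simp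
  then obtain M where M: "\<forall>m\<ge>M. \<forall>k\<ge>M. dist (f (s m)) (f (s k)) < c * r"
    using \<open>Cauchy (\<lambda>k. f (s k))\<close> unfolding Cauchy_def by blast
  have "dist (s m) (s k) < r" if "m \<ge> M" "k \<ge> M" for m k
  proof -
    have "c * norm (s m - s k) \<le> norm (f (s m - s k))"
      using below s \<open>subspace S\<close> by (simp add: subspace_diff)
    also have "\<dots> = dist (f (s m)) (f (s k))"
      using linear_diff[OF \<open>linear f\<close>] by (simp add: dist_norm)
    also have "\<dots> < c * r" using M that by blast
    finally show ?thesis using \<open>c > 0\<close> by (simp add: dist_norm)
  qed
  then show "\<exists>M. \<forall>m\<ge>M. \<forall>n\<ge>M. dist (s m) (s n) < r" by blast
qed

lemma closed_subspace_image_bounded_below: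
  fixes f :: "'a::{real_normed_vector,complete_space} \<Rightarrow> 'b::real_normed_vector"
  assumes "bounded_linear f" "closed_subspace S" "c > 0"
    and below: "\<And>u. u \<in> S \<Longrightarrow> c * norm u \<le> norm (f u)"
  shows "closed_subspace (f ` S)"
proof -
  have sub: "subspace S" and "closed S"
    using assms(2) by (auto simp: closed_subspace_def)
  have "closed (f ` S)"
    unfolding closed_sequential_limits
  proof (intro allI impI)
    fix x l assume "(\<forall>k. x k \<in> f ` S) \<and> x \<longlonglongrightarrow> l"
    then have "x \<longlonglongrightarrow> l" "\<forall>k. \<exists>t\<in>S. x k = f t" by auto
    then obtain s where s: "\<And>k. s k \<in> S" "\<And>k. x k = f (s k)"
      by metis
    then have x: "x = (\<lambda>k. f (s k))" by auto
    have "Cauchy s"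
      using bounded_linear.linear[OF assms(1)] sub \<open>c > 0\<close> below s(1)
        LIMSEQ_imp_Cauchy[OF \<open>x \<longlonglongrightarrow> l\<close>, unfolded x]
      by (rule Cauchy_if_image_Cauchy_bounded_below)
    then obtain t where "s \<longlonglongrightarrow> t" using Cauchy_convergent_iff convergent_def by blast
    then have "t \<in> S" using \<open>closed S\<close> s closed_sequentially by blast
    from x have "x \<longlonglongrightarrow> f t"
      using bounded_linear.tendsto[OF assms(1) \<open>s \<longlonglongrightarrow> t\<close>] by simp
    then show "l \<in> f ` S"
      using \<open>x \<longlonglongrightarrow> l\<close> \<open>t \<in> S\<close> LIMSEQ_unique by blast
  qed
  then show ?thesis
    using sub bounded_linear.linear[OF assms(1)]
    by (simp add: closed_subspace_def linear_subspace_image)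
qed

context
  fixes S A :: "'a::{real_inner,complete_space} set"
  assumes closed_subspace_S: "closed_subspace S" and closed_subspace_A: "closed_subspace A"
begin

lemma orth_proj_adjoint_bounded_below:
  assumes onto: "\<And>s. s \<in> S \<Longrightarrow> \<exists>a\<in>A. orth_proj S a = s"
  shows "\<exists>c>0. \<forall>u\<in>S. c * norm u \<le> norm (orth_proj A u)"
proof (rule Baire_uniform_lower_bound[OF closed_subspace_S])
  show "norm (orth_proj A (- u)) = norm (orth_proj A u)" for u
    by (simp add: linear_neg[OF linear_orth_proj[OF closed_subspace_A]])
  fix s assume "s \<in> S"
  then obtain a where "a \<in> A" "orth_proj S a = s" using onto by blast
  have "u \<bullet> s \<le> norm a * norm (orth_proj A u)" if "u \<in> S" for u
  proof -
    have "u \<bullet> s = a \<bullet> orth_proj A u"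
      using inner_orth_proj[OF closed_subspace_S \<open>u \<in> S\<close>, of a]
        inner_orth_proj[OF closed_subspace_A \<open>a \<in> A\<close>, of u] \<open>orth_proj S a = s\<close>
      by (simp add: inner_commute)
    then show ?thesis by (simp add: norm_cauchy_schwarz)
  qed
  then show "\<exists>M. \<forall>u\<in>S. u \<bullet> s \<le> M * norm (orth_proj A u)" by blast
qed simp

lemma orth_proj_image_eq:
  assumes "c > 0" and below: "\<And>u. u \<in> S \<Longrightarrow> c * norm u \<le> norm (orth_proj A u)"
    and disjoint: "A \<inter> orthogonal_comp S = {0}"
  shows "orth_proj A ` S = A"
proof
  show "orth_proj A ` S \<subseteq> A" using orth_proj_in[OF closed_subspace_A] by blast
  define R where "R = orth_proj A ` S"
  have closed_R: "closed_subspace R"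
    unfolding R_def using closed_subspace_S \<open>c > 0\<close> below
    by (rule closed_subspace_image_bounded_below[OF bounded_linear_orth_proj[OF closed_subspace_A]])
  show "A \<subseteq> orth_proj A ` S"
  proof
    fix a assume "a \<in> A"
    define e where "e = a - orth_proj R a"
    have "e \<in> A"
      using \<open>a \<in> A\<close> orth_proj_in[OF closed_R, of a] orth_proj_in[OF closed_subspace_A] closed_subspace_A
      by (auto simp: e_def R_def closed_subspace_def intro: subspace_diff)
    moreover have "e \<in> orthogonal_comp S"
      unfolding orthogonal_comp_iff
    proof
      fix s assume "s \<in> S"
      have "orth_proj A s \<in> R" using \<open>s \<in> S\<close> by (simp add: R_def)
      then have "orth_proj A s \<bullet> e = 0"
        using orth_proj_residual[OF closed_R, of a] by (simp add: e_def orthogonal_comp_iff)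
      then show "s \<bullet> e = 0"
        using inner_orth_proj[OF closed_subspace_A \<open>e \<in> A\<close>, of s] by (simp add: inner_commute)
    qed
    ultimately have "e = 0" using disjoint by blast
    then show "a \<in> orth_proj A ` S"
      using orth_proj_in[OF closed_R, of a] by (simp add: e_def R_def)
  qed
qed

lemma orth_proj_bounded_below_if_direct_sum:
  assumes "direct_sum_UNIV A (orthogonal_comp S)"
  shows "\<exists>c>0. \<forall>a\<in>A. c * norm a \<le> norm (orth_proj S a)"
proof -
  have disjoint: "A \<inter> orthogonal_comp S = {0}"
    using assms by (simp add: direct_sum_UNIV_def)
  have "\<exists>a\<in>A. orth_proj S a = s" if "s \<in> S" for s
  proof -
    obtain a b where "a \<in> A" "b \<in> orthogonal_comp S" "s = a + b"
      using assms unfolding direct_sum_UNIV_def by blast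
    then have "orth_proj S a = s"
      using closed_subspace_S \<open>s \<in> S\<close> subspace_neg[OF subspace_orthogonal_comp]
      by (intro orth_proj_unique) (auto simp: closed_subspace_def)
    with \<open>a \<in> A\<close> show ?thesis by blast
  qed
  then obtain c where "c > 0" and below: "\<And>u. u \<in> S \<Longrightarrow> c * norm u \<le> norm (orth_proj A u)"
    using orth_proj_adjoint_bounded_below by blast
  have "c * norm a \<le> norm (orth_proj S a)" if "a \<in> A" for a
  proof -
    obtain s where "s \<in> S" and a: "a = orth_proj A s"
      using orth_proj_image_eq[OF \<open>c > 0\<close> below disjoint] \<open>a \<in> A\<close> by blast
    have "(norm a)^2 = s \<bullet> orth_proj S a"
      using inner_orth_proj[OF closed_subspace_A \<open>a \<in> A\<close>, of s] inner_orth_proj[OF closed_subspace_S \<open>s \<in> S\<close>, of a]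
      by (simp add: a power2_norm_eq_inner inner_commute)
    also have "\<dots> \<le> norm s * norm (orth_proj S a)"
      by (rule norm_cauchy_schwarz)
    finally have "c * (norm a)^2 \<le> (c * norm s) * norm (orth_proj S a)"
      using \<open>c > 0\<close> by (simp add: mult.assoc)
    also have "\<dots> \<le> norm a * norm (orth_proj S a)"
      using below[OF \<open>s \<in> S\<close>] a by (simp add: mult_right_mono)
    finally show ?thesis
      by (cases "a = 0") (auto simp: power2_eq_square orth_proj_zero[OF closed_subspace_S])
  qed
  with \<open>c > 0\<close> show ?thesis by blast
qed

lemma cos_subsp_pos_if_direct_sum:
  assumes "direct_sum_UNIV A (orthogonal_comp S)" and "A \<noteq> {0}"
  shows "0 < cos_subsp A S"
proof -
  obtain c where "c > 0" and "\<forall>a\<in>A. c * norm a \<le> norm (orth_proj S a)"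
    using orth_proj_bounded_below_if_direct_sum[OF assms(1)] by blast
  moreover have "A - {0} \<noteq> {}"
    using assms(2) closed_subspace_A subspace_0 by (auto simp: closed_subspace_def)
  ultimately show ?thesis
    using cos_subsp_ge[OF closed_subspace_S] by (meson less_le_trans)
qed

end

section \<open>Convex combinations of the oblique and the orthogonal projection\<close>

locale complementary_subspaces =
  fixes S A :: "'a::{real_inner,complete_space} set"
  assumes closed_subspace_S: "closed_subspace S" and closed_subspace_A: "closed_subspace A"
    and direct_sum: "direct_sum_UNIV A (orthogonal_comp S)"
begin

abbreviation P :: "'a \<Rightarrow> 'a" where "P \<equiv> orth_proj S"
abbreviation Q :: "'a \<Rightarrow> 'a" where "Q \<equiv> obl_proj A (orthogonal_comp S)"

definition mix_proj :: "real \<Rightarrow> 'a \<Rightarrow> 'a" where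
  "mix_proj lam x = lam *\<^sub>R Q x + (1 - lam) *\<^sub>R P x"

definition stretch :: "real \<Rightarrow> 'a \<Rightarrow> 'a" where
  "stretch c y = c *\<^sub>R P y + (y - P y)"

lemma subspace_S: "subspace S" and subspace_A: "subspace A"
  using closed_subspace_S closed_subspace_A by (simp_all add: closed_subspace_def)

lemma orth_proj_residual_S: "x - P x \<in> orthogonal_comp S"
  by (rule orth_proj_residual[OF closed_subspace_S])

lemma orth_proj_S_decompose:
  assumes "w \<in> S" "u \<in> orthogonal_comp S"
  shows "P (w + u) = w"
  using assms by (intro orth_proj_unique[OF subspace_S]) auto

lemma obl_proj_unique:
  assumes "a \<in> A" "x - a \<in> orthogonal_comp S"
  shows "Q x = a"
  unfolding obl_proj_def
proof (rule the_equality)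
  show "a \<in> A \<and> x - a \<in> orthogonal_comp S" using assms by simp
  fix b assume b: "b \<in> A \<and> x - b \<in> orthogonal_comp S"
  have "b - a \<in> A" using b assms subspace_A by (simp add: subspace_diff)
  moreover have "(x - a) - (x - b) \<in> orthogonal_comp S"
    using b assms subspace_orthogonal_comp by (blast intro: subspace_diff)
  ultimately have "b - a \<in> A \<inter> orthogonal_comp S" by simp
  then have "b - a = 0" using direct_sum unfolding direct_sum_UNIV_def by blast
  then show "b = a" by simp
qed

lemma obl_proj_in: "Q x \<in> A" and obl_proj_residual: "x - Q x \<in> orthogonal_comp S"
proof -
  obtain a b where "a \<in> A" "b \<in> orthogonal_comp S" "x = a + b"
    using direct_sum unfolding direct_sum_UNIV_def by blast
  then have "Q x = a" by (intro obl_proj_unique) auto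
  with \<open>a \<in> A\<close> \<open>b \<in> orthogonal_comp S\<close> \<open>x = a + b\<close>
  show "Q x \<in> A" "x - Q x \<in> orthogonal_comp S" by auto
qed

lemma obl_proj_minus_id: "Q x - x \<in> orthogonal_comp S"
  using subspace_neg[OF subspace_orthogonal_comp obl_proj_residual] by simp

lemma obl_proj_id: "a \<in> A \<Longrightarrow> Q a = a"
  by (rule obl_proj_unique) (simp_all add: subspace_0[OF subspace_orthogonal_comp])

lemma obl_proj_orth_proj: "Q (P x) = Q x"
proof (rule obl_proj_unique[OF obl_proj_in])
  have "(x - Q x) - (x - P x) \<in> orthogonal_comp S"
    by (rule subspace_diff[OF subspace_orthogonal_comp obl_proj_residual orth_proj_residual_S])
  then show "P x - Q x \<in> orthogonal_comp S" by simp
qed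

lemma orth_proj_obl_proj: "s \<in> S \<Longrightarrow> P (Q s) = s"
  using obl_proj_minus_id by (intro orth_proj_unique[OF subspace_S]) auto

lemma range_mix_proj: "range (mix_proj lam) = (\<lambda>s. s + lam *\<^sub>R (Q s - s)) ` S"
proof -
  have "mix_proj lam x = P x + lam *\<^sub>R (Q (P x) - P x)" for x
    by (simp add: mix_proj_def obl_proj_orth_proj algebra_simps)
  then have "range (mix_proj lam) = (\<lambda>s. s + lam *\<^sub>R (Q s - s)) ` range P"
    by (auto simp: image_iff)
  also have "range P = S"
  proof
    show "range P \<subseteq> S" using orth_proj_in[OF closed_subspace_S] by blast
    show "S \<subseteq> range P" using orth_proj_id[OF closed_subspace_S] by (metis rangeI subsetI)
  qed
  finally show ?thesis .
qed

lemma range_mix_proj_one: "range (mix_proj 1) = A"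
proof -
  have "range (mix_proj 1) = range Q" by (simp add: mix_proj_def)
  also have "range Q = A"
  proof
    show "range Q \<subseteq> A" using obl_proj_in by blast
    show "A \<subseteq> range Q" using obl_proj_id by (metis rangeI subsetI)
  qed
  finally show ?thesis .
qed

lemma orthogonal_comp_range_mix_proj:
  "y \<in> orthogonal_comp (range (mix_proj lam)) \<longleftrightarrow>
     (\<forall>s\<in>S. s \<bullet> P y + lam * ((Q s - s) \<bullet> (y - P y)) = 0)"
proof -
  have "(s + lam *\<^sub>R (Q s - s)) \<bullet> y = s \<bullet> P y + lam * ((Q s - s) \<bullet> (y - P y))"
    if "s \<in> S" for s
  proof -
    have "s \<bullet> (y - P y) = 0"
      using that orth_proj_residual_S by (simp add: orthogonal_comp_iff)
    moreover have "(Q s - s) \<bullet> P y = 0"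
      using obl_proj_minus_id orth_proj_in[OF closed_subspace_S]
      by (simp add: orthogonal_comp_iff inner_commute)
    ultimately show ?thesis
      by (simp add: inner_add_left inner_diff_right algebra_simps)
  qed
  then show ?thesis
    by (simp add: orthogonal_comp_iff range_mix_proj)
qed

lemma orth_proj_stretch: "P (stretch c y) = c *\<^sub>R P y"
  unfolding stretch_def
  by (rule orth_proj_S_decompose[OF subspace_scale[OF subspace_S orth_proj_in[OF closed_subspace_S]]
        orth_proj_residual_S])

lemma stretch_residual: "stretch c y - P (stretch c y) = y - P y"
  unfolding orth_proj_stretch by (simp add: stretch_def)

lemma norm_stretch_sq: "(norm (stretch c y))^2 = c^2 * (norm (P y))^2 + (norm (y - P y))^2"
proof -
  have "(c *\<^sub>R P y) \<bullet> (y - P y) = 0"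
    using orth_proj_residual_S orth_proj_in[OF closed_subspace_S] by (simp add: orthogonal_comp_iff)
  then show ?thesis
    using norm_add_Pythagorean[of "c *\<^sub>R P y" "y - P y"]
    by (simp add: stretch_def orthogonal_def power_mult_distrib)
qed

lemma stretch_mem_orthogonal_comp_range_mix_proj:
  assumes "y \<in> orthogonal_comp (range (mix_proj mu))"
  shows "stretch c y \<in> orthogonal_comp (range (mix_proj (c * mu)))"
proof -
  have "s \<bullet> P y + mu * ((Q s - s) \<bullet> (y - P y)) = 0" if "s \<in> S" for s
    using assms that unfolding orthogonal_comp_range_mix_proj by blast
  then show ?thesis
    unfolding orthogonal_comp_range_mix_proj
    by (simp only: stretch_residual) (simp add: orth_proj_stretch distrib_left[of c, symmetric] mult.assoc)
qed

lemma residual_nonzero_if_orthogonal_A: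
  assumes "y \<in> orthogonal_comp A" "y \<noteq> 0"
  shows "y - P y \<noteq> 0"
proof
  assume "y - P y = 0"
  moreover have "y \<in> orthogonal_comp (range (mix_proj 1))"
    using assms(1) range_mix_proj_one by simp
  then have "P y \<bullet> P y + 1 * ((Q (P y) - P y) \<bullet> (y - P y)) = 0"
    using orth_proj_in[OF closed_subspace_S] unfolding orthogonal_comp_range_mix_proj by blast
  with \<open>y - P y = 0\<close> have "P y = 0" by simp
  with \<open>y - P y = 0\<close> assms(2) show False by simp
qed

lemma stretch_nonzero_if_orthogonal_A:
  assumes "y \<in> orthogonal_comp A" "y \<noteq> 0"
  shows "stretch c y \<noteq> 0"
  using residual_nonzero_if_orthogonal_A[OF assms] stretch_residual[of c y]
    orth_proj_zero[OF closed_subspace_S] by force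

lemma norm_obl_proj_minus_id_le:
  assumes "A \<noteq> {0}" "s \<in> S"
  shows "norm (Q s - s) \<le> sin_subsp A S / cos_subsp A S * norm s"
proof -
  have "cos_subsp A S > 0"
    using cos_subsp_pos_if_direct_sum[OF closed_subspace_S closed_subspace_A direct_sum assms(1)] .
  have "A - {0} \<noteq> {}"
    using assms(1) subspace_0[OF subspace_A] by auto
  have "Q s \<in> A" and P_Q: "P (Q s) = s"
    using obl_proj_in orth_proj_obl_proj[OF assms(2)] by auto
  then have "norm (Q s - s) \<le> sin_subsp A S * norm (Q s)"
    using norm_residual_le_sin_subsp[OF closed_subspace_S] by metis
  also have "\<dots> \<le> sin_subsp A S * (norm s / cos_subsp A S)"
    using cos_subsp_le_norm_orth_proj[OF closed_subspace_S \<open>Q s \<in> A\<close>] P_Q \<open>cos_subsp A S > 0\<close>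
      sin_subsp_nonneg[OF closed_subspace_S \<open>A - {0} \<noteq> {}\<close>]
    by (intro mult_left_mono) (simp_all add: le_divide_eq mult.commute)
  finally show ?thesis by simp
qed

lemma norm_orth_proj_le_if_orthogonal_A:
  assumes "A \<noteq> {0}" "y \<in> orthogonal_comp A"
  shows "norm (P y) \<le> sin_subsp A S / cos_subsp A S * norm (y - P y)"
proof -
  define N where "N = sin_subsp A S / cos_subsp A S"
  define w u where "w = P y" and "u = y - P y"
  have "0 \<le> N"
    using cos_subsp_pos_if_direct_sum[OF closed_subspace_S closed_subspace_A direct_sum assms(1)]
      sin_subsp_nonneg[OF closed_subspace_S, of A] assms(1) subspace_0[OF subspace_A]
    by (force simp: N_def)
  have "w \<in> S" using orth_proj_in[OF closed_subspace_S] by (simp add: w_def)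
  have "y \<in> orthogonal_comp (range (mix_proj 1))"
    using assms(2) range_mix_proj_one by simp
  then have "w \<bullet> w + 1 * ((Q w - w) \<bullet> u) = 0"
    using \<open>w \<in> S\<close> unfolding orthogonal_comp_range_mix_proj w_def u_def by blast
  then have "(norm w)^2 = - ((Q w - w) \<bullet> u)"
    by (simp add: power2_norm_eq_inner)
  also have "\<dots> \<le> norm (Q w - w) * norm u"
    using Cauchy_Schwarz_ineq2[of "Q w - w" u] by linarith
  also have "\<dots> \<le> N * norm w * norm u"
    unfolding N_def by (rule mult_right_mono[OF norm_obl_proj_minus_id_le[OF assms(1) \<open>w \<in> S\<close>]]) simp
  finally have "norm w * norm w \<le> (N * norm u) * norm w"
    by (simp add: power2_eq_square algebra_simps)
  then have "norm w \<le> N * norm u"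
    using \<open>0 \<le> N\<close> by (cases "w = 0") auto
  then show ?thesis by (simp add: N_def w_def u_def)
qed

lemma sin_subsp_orthogonal_comp_range_mix_proj_lower:
  assumes "A \<noteq> {0}" "orthogonal_comp A \<noteq> {0}"
  shows "1 / (1 + lam^2 * ((sin_subsp A S)^2 / (cos_subsp A S)^2))
    \<le> (sin_subsp (orthogonal_comp (range (mix_proj lam))) S)^2"
proof -
  define N where "N = sin_subsp A S / cos_subsp A S"
  define sB where "sB = sin_subsp (orthogonal_comp (range (mix_proj lam))) S"
  obtain y where y: "y \<in> orthogonal_comp A" "y \<noteq> 0"
    using assms(2) subspace_0[OF subspace_orthogonal_comp] by blast
  define w u where "w = P y" and "u = y - P y"
  have "u \<noteq> 0"
    using residual_nonzero_if_orthogonal_A[OF y] by (simp add: u_def)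
  have "stretch lam y \<in> orthogonal_comp (range (mix_proj lam))"
    using y(1) range_mix_proj_one stretch_mem_orthogonal_comp_range_mix_proj[of y 1 lam] by simp
  then have "norm u \<le> sB * norm (stretch lam y)"
    using norm_residual_le_sin_subsp[OF closed_subspace_S] stretch_residual[of lam y]
    by (metis sB_def u_def)
  then have "(norm u)^2 \<le> (sB * norm (stretch lam y))^2"
    by (rule power_mono) simp
  also have "\<dots> = sB^2 * (lam^2 * (norm w)^2 + (norm u)^2)"
    using norm_stretch_sq[of lam y] by (simp add: power_mult_distrib w_def u_def)
  also have "\<dots> \<le> sB^2 * ((1 + lam^2 * N^2) * (norm u)^2)"
  proof -
    have "norm w \<le> N * norm u"
      unfolding N_def w_def u_def by (rule norm_orth_proj_le_if_orthogonal_A[OF assms(1) y(1)])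
    then have "(norm w)^2 \<le> N^2 * (norm u)^2"
      using power_mono[of "norm w" "N * norm u" 2] by (simp add: power_mult_distrib)
    then have "lam^2 * (norm w)^2 \<le> lam^2 * (N^2 * (norm u)^2)"
      by (simp add: mult_left_mono)
    then show ?thesis
      by (intro mult_left_mono) (simp_all add: algebra_simps)
  qed
  finally have "1 \<le> sB^2 * (1 + lam^2 * N^2)"
    using \<open>u \<noteq> 0\<close> by (simp add: mult.assoc[symmetric])
  then show ?thesis
    by (simp add: sB_def N_def power_divide divide_le_eq add_pos_nonneg mult.commute)
qed

lemma norm_residual_sq_le_if_orthogonal_range_mix_proj:
  assumes "orthogonal_comp A \<noteq> {0}" "y \<in> orthogonal_comp (range (mix_proj lam))"
  shows "(norm (y - P y))^2 * ((sin_subsp (orthogonal_comp A) S)^2 + lam^2 * (cos_subsp (orthogonal_comp A) S)^2)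
    \<le> (sin_subsp (orthogonal_comp A) S)^2 * (norm y)^2"
proof -
  define X where "X = (sin_subsp (orthogonal_comp A) S)^2"
  define C where "C = (cos_subsp (orthogonal_comp A) S)^2"
  define w u where "w = P y" and "u = y - P y"
  have "orthogonal_comp A - {0} \<noteq> {}"
    using assms(1) subspace_0[OF subspace_orthogonal_comp] by auto
  then have "C \<le> 1 - X" and sin_nonneg: "0 \<le> sin_subsp (orthogonal_comp A) S"
    using cos_subsp_sq_le_one_minus_sin_subsp_sq[OF closed_subspace_S]
      sin_subsp_nonneg[OF closed_subspace_S] by (simp_all add: C_def X_def)
  have "lam^2 * (norm u)^2 * (1 - X) \<le> X * (norm w)^2"
  proof (cases "lam = 0")
    case False
    have "stretch (1 / lam) y \<in> orthogonal_comp A"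
      using stretch_mem_orthogonal_comp_range_mix_proj[OF assms(2), of "1 / lam"] False range_mix_proj_one
      by simp
    then have "norm u \<le> sin_subsp (orthogonal_comp A) S * norm (stretch (1 / lam) y)"
      using norm_residual_le_sin_subsp[OF closed_subspace_S] stretch_residual by (metis u_def)
    then have "(norm u)^2 \<le> X * (norm (stretch (1 / lam) y))^2"
      using sin_nonneg by (simp add: X_def power_mono power_mult_distrib[symmetric])
    also have "(norm (stretch (1 / lam) y))^2 = (norm w)^2 / lam^2 + (norm u)^2"
      using norm_stretch_sq[of "1 / lam" y] by (simp add: power_divide w_def u_def)
    finally show ?thesis
      using False by (simp add: field_simps)
  qed (simp add: X_def)
  moreover have "lam^2 * (norm u)^2 * C \<le> lam^2 * (norm u)^2 * (1 - X)"
    using \<open>C \<le> 1 - X\<close> by (simp add: mult_left_mono)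
  ultimately have "(norm u)^2 * (X + lam^2 * C) \<le> X * ((norm w)^2 + (norm u)^2)"
    by (simp add: algebra_simps)
  then show ?thesis
    using norm_orth_proj_Pythagorean[OF closed_subspace_S, of y] by (simp add: X_def C_def w_def u_def)
qed

lemma sin_subsp_orthogonal_comp_range_mix_proj_upper:
  assumes "orthogonal_comp A \<noteq> {0}" "sin_subsp (orthogonal_comp A) S > 0"
  shows "(sin_subsp (orthogonal_comp (range (mix_proj lam))) S)^2
    \<le> 1 / (1 + lam^2 * ((cos_subsp (orthogonal_comp A) S)^2 / (sin_subsp (orthogonal_comp A) S)^2))"
proof -
  define X where "X = (sin_subsp (orthogonal_comp A) S)^2"
  define C where "C = (cos_subsp (orthogonal_comp A) S)^2"
  define bound where "bound = X / (X + lam^2 * C)"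
  have "X > 0" using assms(2) by (simp add: X_def)
  then have "X + lam^2 * C > 0" by (simp add: C_def add_pos_nonneg)
  obtain y where y: "y \<in> orthogonal_comp A" "y \<noteq> 0"
    using assms(1) subspace_0[OF subspace_orthogonal_comp] by blast
  have "stretch lam y \<in> orthogonal_comp (range (mix_proj lam))"
    using y(1) range_mix_proj_one stretch_mem_orthogonal_comp_range_mix_proj[of y 1 lam] by simp
  then have nontrivial: "orthogonal_comp (range (mix_proj lam)) - {0} \<noteq> {}"
    using stretch_nonzero_if_orthogonal_A[OF y] by blast
  have "norm (y' - P y') \<le> sqrt bound * norm y'"
    if "y' \<in> orthogonal_comp (range (mix_proj lam))" for y'
  proof -
    have "(norm (y' - P y'))^2 \<le> bound * (norm y')^2"
      using norm_residual_sq_le_if_orthogonal_range_mix_proj[OF assms(1) that] \<open>X + lam^2 * C > 0\<close>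
      by (simp add: bound_def X_def C_def field_simps)
    then have "sqrt ((norm (y' - P y'))^2) \<le> sqrt (bound * (norm y')^2)"
      by (rule real_sqrt_le_mono)
    then show ?thesis by (simp add: real_sqrt_mult)
  qed
  then have "sin_subsp (orthogonal_comp (range (mix_proj lam))) S \<le> sqrt bound"
    by (rule sin_subsp_le[OF closed_subspace_S nontrivial])
  then have "(sin_subsp (orthogonal_comp (range (mix_proj lam))) S)^2 \<le> bound"
    using sin_subsp_nonneg[OF closed_subspace_S nontrivial] \<open>X > 0\<close> \<open>X + lam^2 * C > 0\<close>
    by (metis bound_def divide_nonneg_pos less_imp_le power_mono real_sqrt_pow2)
  also have "bound = 1 / (1 + lam^2 * (C / X))"
    using \<open>X > 0\<close> by (simp add: bound_def field_simps)
  finally show ?thesis by (simp add: C_def X_def)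
qed

end

theorem mainTheorem7:
  fixes S A :: "'a::{real_inner, complete_space} set" and lam :: real
  assumes "closed_subspace S" and "closed_subspace A"
    and "S \<noteq> {0}" and "A \<noteq> {0}"
    and "orthogonal_comp S \<noteq> {0}" and "orthogonal_comp A \<noteq> {0}"
    and "direct_sum_UNIV A (orthogonal_comp S)"
    and "sin_subsp (orthogonal_comp A) S > 0"
    and "0 \<le> lam" and "lam \<le> 1"
  defines "B \<equiv> (\<lambda>x. lam *\<^sub>R obl_proj A (orthogonal_comp S) x + (1 - lam) *\<^sub>R orth_proj S x)"
  shows "1 / (1 + lam\<^sup>2 * ((sin_subsp A S)\<^sup>2 / (cos_subsp A S)\<^sup>2))
           \<le> (sin_subsp (orthogonal_comp (range B)) S)\<^sup>2
     \<and> (sin_subsp (orthogonal_comp (range B)) S)\<^sup>2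
           \<le> 1 / (1 + lam\<^sup>2 * ((cos_subsp (orthogonal_comp A) S)\<^sup>2 / (sin_subsp (orthogonal_comp A) S)\<^sup>2))"
proof -
  interpret complementary_subspaces S A
    using assms(1,2,7) by unfold_locales
  have "B = mix_proj lam"
    by (simp add: B_def mix_proj_def fun_eq_iff)
  then show ?thesis
    using sin_subsp_orthogonal_comp_range_mix_proj_lower[OF assms(4,6)]
      sin_subsp_orthogonal_comp_range_mix_proj_upper[OF assms(6,8)]
    by simp
qed

end
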